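(* Let $q$ be a vertex-labelled query hypergraph with labelling $l_q$ and $H$ a vertex-labelled data hypergraph with labelling $l_H$. Let $q'$ be a partial query of $q$ with hyperedges $e_1,\dots,e_k$ (in matching order), and let $e_{q'}=e_k$ be its last hyperedge. Let $m'$ be a partial embedding of $q'$, i.e. an injective assignment $f(e_i)\in E(H)$ ($1\le i\le k$), and write $e_{m'}=f(e_k)$. Assume that the partial embedding $m=(f(e_1),\dots,f(e_{k-1}))$ is a valid embedding of the partial query $q''$ formed by $e_1,\dots,e_{k-1}$. Then $m'$ is a valid embedding of $q'$ if and only if the two multisets $$\{\mathcal{P}_{q'\rightarrow m'}(u) : u\in e_{q'}\} \quad\text{and}\quad \{\mathcal{P}(v) : v\in e_{m'}\}$$ are equal.
   Context: A hypergraph consists of a vertex set and a set of hyperedges, each a nonempty subset of the vertex set; vertices carry labels. A partial query $q'$ is the subhypergraph of $q$ formed by a set of query hyperedges together with the vertices they contain. For a partial embedding $m'$ (an injective map $f$ from $E(q')$ to $E(H)$), $H_{m'}$ denotes the subhypergraph of $H$ consisting of the data hyperedges $f(e)$, $e\in E(q')$, and the vertices they contain. The partial embedding $m'$ is valid (an embedding of $q'$) if there exists a bijection $g:V(q')\to V(H_{m'})$ with $l_H(g(u))=l_q(u)$ for all $u\in V(q')$ and $g(e)=f(e)$ (as vertex sets) for every $e\in E(q')$. For a data vertex $v\in V(H_{m'})$, its vertex profile is $\mathcal{P}(v)=(l_H(v),\, he_{H_{m'}}(v))$, where $he_{H_{m'}}(v)$ is the set of hyperedges of $H_{m'}$ containing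 $v$. For a query vertex $u\in V(q')$, $\mathcal{P}_{q'\rightarrow m'}(u)=(l_q(u),\,\{f(e): e\in he_{q'}(u)\})$, where $he_{q'}(u)$ is the set of hyperedges of $q'$ containing $u$. *)

theory Defs
  imports Main "HOL-Library.Multiset"
begin

definition hypergraph :: "'a set \<Rightarrow> 'a set set \<Rightarrow> bool" where
  "hypergraph V E \<longleftrightarrow> finite V \<and> (\<forall>e\<in>E. e \<noteq> {} \<and> e \<subseteq> V)"

text \<open>A partial query is given by the list es of its query hyperedges (in matching order);
  a partial embedding by the list fs of the images, fs!i = f(es!i).\<close>
definition valid_embedding ::
  "('u \<Rightarrow> 'l) \<Rightarrow> ('v \<Rightarrow> 'l) \<Rightarrow> 'u set list \<Rightarrow> 'v set list \<Rightarrow> bool" where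
  "valid_embedding lq lH es fs \<longleftrightarrow>
     (\<exists>g. bij_betw g (\<Union>(set es)) (\<Union>(set fs))
        \<and> (\<forall>u\<in>\<Union>(set es). lH (g u) = lq u)
        \<and> (\<forall>i<length es. g ` (es!i) = fs!i))"

definition data_profile :: "('v \<Rightarrow> 'l) \<Rightarrow> 'v set list \<Rightarrow> 'v \<Rightarrow> 'l \<times> 'v set set" where
  "data_profile lH fs v = (lH v, {e \<in> set fs. v \<in> e})"

definition query_profile ::
  "('u \<Rightarrow> 'l) \<Rightarrow> 'u set list \<Rightarrow> 'v set list \<Rightarrow> 'u \<Rightarrow> 'l \<times> 'v set set" where
  "query_profile lq es fs u = (lq u, {fs!i | i. i < length es \<and> u \<in> es!i})"

end

theory Submission
  imports Defs
begin

text \<open>Record every vertex by its label together with the set of \<^emph>\<open>positions\<close> of the hyperedges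
  containing it. A label- and incidence-preserving bijection exists iff the multisets of these
  profiles over all vertices coincide: one direction transports profiles, the other matches the
  fibres of equal profiles by bijections. Deleting position \<open>k\<close> from the profiles of \<open>q'\<close> and
  discarding the empty ones gives the profiles of \<open>q''\<close>, while the profiles containing \<open>k\<close> are
  those of the last hyperedge; the vertices outside it keep their \<open>q''\<close>-profile, so the two
  pieces determine the whole multiset. Finally, as \<open>f\<close> is injective, naming a hyperedge by its
  position or by its image in \<open>H\<close> carries the same information.\<close>

lemma count_image_mset_mset_set:
  assumes "finite A"
  shows "count (image_mset f (mset_set A)) y = card {x \<in> A. f x = y}"
  using assms by (simp add: count_image_mset Int_commute vimage_def Collect_conj_eq)

lemma image_mset_mset_set_eq_imp_bij_betw:
  assumes "finite A" "finite B" "image_mset f (mset_set A) = image_mset g (mset_set B)"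
  obtains h where "bij_betw h A B" "\<And>x. x \<in> A \<Longrightarrow> g (h x) = f x"
proof -
  have "card {x \<in> A. f x = y} = card {x \<in> B. g x = y}" for y
    using assms count_image_mset_mset_set[OF assms(1), of f y]
      count_image_mset_mset_set[OF assms(2), of g y] by simp
  then have "\<exists>h. bij_betw h {x \<in> A. f x = y} {x \<in> B. g x = y}" for y
    using assms(1,2) by (intro finite_same_card_bij) auto
  then obtain h where h: "\<And>y. bij_betw (h y) {x \<in> A. f x = y} {x \<in> B. g x = y}"
    by metis
  define h' where "h' x = h (f x) x" for x
  have maps: "h' x \<in> B \<and> g (h' x) = f x" if "x \<in> A" for x
    using bij_betwE[OF h[of "f x"]] that unfolding h'_def by auto
  have "inj_on h' A"
  proof
    fix x x' assume "x \<in> A" "x' \<in> A" "h' x = h' x'"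
    moreover from this have "f x = f x'"
      using maps by metis
    ultimately show "x = x'"
      using bij_betw_imp_inj_on[OF h[of "f x"]] unfolding h'_def by (auto simp: inj_on_def)
  qed
  moreover have "B \<subseteq> h' ` A"
  proof
    fix y assume "y \<in> B"
    then have "y \<in> h (g y) ` {x \<in> A. f x = g y}"
      using bij_betw_imp_surj_on[OF h[of "g y"]] by simp
    then obtain x where "x \<in> A" "f x = g y" "y = h (g y) x"
      by blast
    then have "y = h' x"
      unfolding h'_def by simp
    with \<open>x \<in> A\<close> show "y \<in> h' ` A"
      by blast
  qed
  ultimately have "bij_betw h' A B"
    using maps by (auto simp: bij_betw_def)
  with maps show thesis
    using that by blast
qed

lemma image_mset_eq_iff_inj_on:
  assumes "inj_on f (set_mset A \<union> set_mset B)"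
  shows "image_mset f A = image_mset f B \<longleftrightarrow> A = B"
  using image_mset_eq_image_mset_plusD[of f A B "{#}"] assms by auto

definition index_profile :: "('a \<Rightarrow> 'l) \<Rightarrow> 'a set list \<Rightarrow> 'a \<Rightarrow> 'l \<times> nat set" where
  "index_profile l es x = (l x, {i. i < length es \<and> x \<in> es ! i})"

definition profile_mset :: "('a \<Rightarrow> 'l) \<Rightarrow> 'a set list \<Rightarrow> ('l \<times> nat set) multiset" where
  "profile_mset l es = image_mset (index_profile l es) (mset_set (\<Union>(set es)))"

definition forget_index :: "nat \<Rightarrow> ('l \<times> nat set) multiset \<Rightarrow> ('l \<times> nat set) multiset" where
  "forget_index n M = filter_mset (\<lambda>p. snd p \<noteq> {}) (image_mset (apsnd (\<lambda>I. I - {n})) M)"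

lemma index_profile_eq_if_embeds:
  assumes "bij_betw g (\<Union>(set es)) (\<Union>(set fs))" "length es = length fs"
    and "\<forall>x\<in>\<Union>(set es). lH (g x) = lq x" "\<forall>i<length es. g ` (es ! i) = fs ! i"
    and "x \<in> \<Union>(set es)"
  shows "index_profile lH fs (g x) = index_profile lq es x"
proof -
  have "g x \<in> fs ! i \<longleftrightarrow> x \<in> es ! i" if i: "i < length es" for i
  proof
    assume "g x \<in> fs ! i"
    then have "g x \<in> g ` (es ! i)"
      using assms(4) i by simp
    then obtain x' where "x' \<in> es ! i" "g x' = g x"
      by (metis imageE)
    moreover have "x' \<in> \<Union>(set es)"
      using \<open>x' \<in> es ! i\<close> i nth_mem by blast
    ultimately show "x \<in> es ! i"
      using assms(1,5) by (metis bij_betw_def inj_onD)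
  qed (use assms(4) i in blast)
  then show ?thesis
    using assms(2,3,5) by (auto simp: index_profile_def)
qed

lemma valid_embedding_iff_profile_mset_eq:
  assumes "length es = length fs" "finite (\<Union>(set es))" "finite (\<Union>(set fs))"
  shows "valid_embedding lq lH es fs \<longleftrightarrow> profile_mset lq es = profile_mset lH fs"
proof
  assume "valid_embedding lq lH es fs"
  then obtain g where g: "bij_betw g (\<Union>(set es)) (\<Union>(set fs))"
    "\<forall>x\<in>\<Union>(set es). lH (g x) = lq x" "\<forall>i<length es. g ` (es ! i) = fs ! i"
    unfolding valid_embedding_def by blast
  then have "mset_set (\<Union>(set fs)) = image_mset g (mset_set (\<Union>(set es)))"
    by (simp add: image_mset_mset_set bij_betw_def)
  then have "profile_mset lH fs = image_mset (index_profile lH fs \<circ> g) (mset_set (\<Union>(set es)))"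
    by (simp add: profile_mset_def image_mset.compositionality)
  also have "\<dots> = profile_mset lq es"
    unfolding profile_mset_def
    using index_profile_eq_if_embeds[OF g(1) assms(1) g(2,3)] assms(2)
    by (intro image_mset_cong) simp
  finally show "profile_mset lq es = profile_mset lH fs" ..
next
  assume "profile_mset lq es = profile_mset lH fs"
  then obtain g where g: "bij_betw g (\<Union>(set es)) (\<Union>(set fs))"
    and profile: "\<And>x. x \<in> \<Union>(set es) \<Longrightarrow> index_profile lH fs (g x) = index_profile lq es x"
    using image_mset_mset_set_eq_imp_bij_betw[OF assms(2,3)] unfolding profile_mset_def by metis
  have incidence: "g x \<in> fs ! i \<longleftrightarrow> x \<in> es ! i" if "x \<in> \<Union>(set es)" "i < length es" for x i
  proof -
    have "{i. i < length es \<and> g x \<in> fs ! i} = {i. i < length es \<and> x \<in> es ! i}"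
      using profile[OF that(1)] assms(1) by (simp add: index_profile_def)
    then show ?thesis
      using that(2) by blast
  qed
  have "g ` (es ! i) = fs ! i" if i: "i < length es" for i
  proof
    show "g ` (es ! i) \<subseteq> fs ! i"
      using incidence i nth_mem by blast
    show "fs ! i \<subseteq> g ` (es ! i)"
    proof
      fix y assume y: "y \<in> fs ! i"
      then have "y \<in> g ` \<Union>(set es)"
        using g i assms(1) nth_mem by (metis UnionI bij_betw_imp_surj_on)
      then obtain x where "x \<in> \<Union>(set es)" "y = g x"
        by blast
      with incidence y i show "y \<in> g ` (es ! i)"
        by blast
    qed
  qed
  moreover have "\<forall>x\<in>\<Union>(set es). lH (g x) = lq x"
    using profile by (simp add: index_profile_def)
  ultimately show "valid_embedding lq lH es fs"
    unfolding valid_embedding_def using g by blast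
qed

lemma index_profile_nonempty_iff: "snd (index_profile l es x) \<noteq> {} \<longleftrightarrow> x \<in> \<Union>(set es)"
  by (auto simp: index_profile_def set_conv_nth)

lemma snd_nonempty_if_in_profile_mset:
  assumes "p \<in># profile_mset l es"
  shows "snd p \<noteq> {}"
proof (cases "finite (\<Union>(set es))")
  case True
  with assms show ?thesis
    using index_profile_nonempty_iff by (fastforce simp: profile_mset_def)
qed (use assms in \<open>simp add: profile_mset_def\<close>)

lemma index_profile_butlast:
  "es \<noteq> [] \<Longrightarrow> index_profile l (butlast es) = apsnd (\<lambda>I. I - {length es - 1}) \<circ> index_profile l es"
  by (auto simp: index_profile_def nth_butlast fun_eq_iff)

lemma profile_mset_butlast:
  assumes "es \<noteq> []" "finite (\<Union>(set es))"
  shows "profile_mset l (butlast es) = forget_index (length es - 1) (profile_mset l es)"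
proof -
  have "\<Union>(set (butlast es)) = {x \<in> \<Union>(set es). snd (index_profile l (butlast es) x) \<noteq> {}}"
    by (auto simp: index_profile_nonempty_iff dest: in_set_butlastD)
  then show ?thesis
    using assms by (simp add: forget_index_def profile_mset_def filter_mset_image_mset
        image_mset.compositionality index_profile_butlast)
qed

lemma profile_mset_last:
  assumes "es \<noteq> []" "finite (\<Union>(set es))"
  shows "filter_mset (\<lambda>p. length es - 1 \<in> snd p) (profile_mset l es)
    = image_mset (index_profile l es) (mset_set (last es))"
proof -
  have "{x \<in> \<Union>(set es). length es - 1 \<in> snd (index_profile l es x)} = last es"
    using assms(1) by (auto simp: index_profile_def last_conv_nth)
  then show ?thesis
    using assms(2) by (simp add: profile_mset_def filter_mset_image_mset)
qed

lemma forget_index_split: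
  assumes "\<forall>p\<in>#M. snd p \<noteq> {}"
  shows "forget_index n M
    = filter_mset (\<lambda>p. n \<notin> snd p) M + forget_index n (filter_mset (\<lambda>p. n \<in> snd p) M)"
  using assms by (induction M) (auto simp: forget_index_def)

lemma mset_eq_by_forget_index:
  assumes "\<forall>p\<in>#M. snd p \<noteq> {}" "\<forall>p\<in>#N. snd p \<noteq> {}"
    and "forget_index n M = forget_index n N"
    and "filter_mset (\<lambda>p. n \<in> snd p) M = filter_mset (\<lambda>p. n \<in> snd p) N"
  shows "M = N"
proof -
  have "filter_mset (\<lambda>p. n \<notin> snd p) M = filter_mset (\<lambda>p. n \<notin> snd p) N"
    using forget_index_split[OF assms(1), of n] forget_index_split[OF assms(2), of n] assms(3,4)
    by simp
  then show ?thesis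
    using multiset_partition[of M "\<lambda>p. n \<in> snd p"] multiset_partition[of N "\<lambda>p. n \<in> snd p"] assms(4)
    by simp
qed

lemma profile_mset_eq_iff_last_profiles_eq:
  assumes "es \<noteq> []" "length es = length fs" "finite (\<Union>(set es))" "finite (\<Union>(set fs))"
    and "profile_mset lq (butlast es) = profile_mset lH (butlast fs)"
  shows "profile_mset lq es = profile_mset lH fs \<longleftrightarrow>
    image_mset (index_profile lq es) (mset_set (last es))
      = image_mset (index_profile lH fs) (mset_set (last fs))"
proof -
  let ?n = "length es - 1"
  have "fs \<noteq> []"
    using assms(1,2) by auto
  have last_es: "image_mset (index_profile lq es) (mset_set (last es))
      = filter_mset (\<lambda>p. ?n \<in> snd p) (profile_mset lq es)"
    using profile_mset_last[OF assms(1,3), of lq] by (rule sym)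
  have last_fs: "image_mset (index_profile lH fs) (mset_set (last fs))
      = filter_mset (\<lambda>p. ?n \<in> snd p) (profile_mset lH fs)"
    using profile_mset_last[OF \<open>fs \<noteq> []\<close> assms(4), of lH, symmetric] assms(2) by simp
  have "forget_index ?n (profile_mset lq es) = profile_mset lq (butlast es)"
    using profile_mset_butlast[OF assms(1,3), of lq] by (rule sym)
  also have "\<dots> = profile_mset lH (butlast fs)"
    by (rule assms(5))
  also have "\<dots> = forget_index ?n (profile_mset lH fs)"
    using profile_mset_butlast[OF \<open>fs \<noteq> []\<close> assms(4), of lH] assms(2) by simp
  finally have forget: "forget_index ?n (profile_mset lq es) = forget_index ?n (profile_mset lH fs)" .
  show ?thesis
    unfolding last_es last_fs
  proof
    assume "filter_mset (\<lambda>p. ?n \<in> snd p) (profile_mset lq es)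
      = filter_mset (\<lambda>p. ?n \<in> snd p) (profile_mset lH fs)"
    then show "profile_mset lq es = profile_mset lH fs"
      by (intro mset_eq_by_forget_index[OF _ _ forget]) (simp_all add: snd_nonempty_if_in_profile_mset)
  qed simp
qed

lemma query_profile_eq_apsnd_index_profile:
  "query_profile lq es fs = apsnd ((`) ((!) fs)) \<circ> index_profile lq es"
  by (auto simp: query_profile_def index_profile_def fun_eq_iff)

lemma data_profile_eq_apsnd_index_profile:
  "data_profile lH fs = apsnd ((`) ((!) fs)) \<circ> index_profile lH fs"
  by (auto simp: data_profile_def index_profile_def in_set_conv_nth fun_eq_iff)

lemma inj_on_apsnd_image_nth:
  assumes "distinct fs"
  shows "inj_on (apsnd ((`) ((!) fs))) (UNIV \<times> Pow {..<length fs})"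
proof -
  have "inj_on ((`) ((!) fs)) (Pow {..<length fs})"
    using assms by (intro inj_on_image_Pow inj_on_nth) auto
  then show ?thesis
    by (auto simp: inj_on_def)
qed

lemma query_data_profiles_eq_iff:
  assumes "distinct fs" "length es = length fs"
  shows "image_mset (query_profile lq es fs) A = image_mset (data_profile lH fs) B \<longleftrightarrow>
    image_mset (index_profile lq es) A = image_mset (index_profile lH fs) B"
proof -
  let ?R = "apsnd ((`) ((!) fs))"
  have "inj_on ?R
      (set_mset (image_mset (index_profile lq es) A) \<union> set_mset (image_mset (index_profile lH fs) B))"
    using assms(2)
    by (intro inj_on_subset[OF inj_on_apsnd_image_nth[OF assms(1)]]) (auto simp: index_profile_def)
  moreover have "image_mset (query_profile lq es fs) A = image_mset ?R (image_mset (index_profile lq es) A)"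
    by (simp add: image_mset.compositionality query_profile_eq_apsnd_index_profile)
  moreover have "image_mset (data_profile lH fs) B = image_mset ?R (image_mset (index_profile lH fs) B)"
    by (simp add: image_mset.compositionality data_profile_eq_apsnd_index_profile)
  ultimately show ?thesis
    by (simp add: image_mset_eq_iff_inj_on)
qed

lemma finite_Union_hyperedges:
  assumes "hypergraph V E" "set es \<subseteq> E"
  shows "finite (\<Union>(set es))"
  using assms by (meson Union_least finite_subset hypergraph_def subsetD)

theorem mainTheorem1:
  fixes Vq :: "'u set" and Eq :: "'u set set" and lq :: "'u \<Rightarrow> 'l"
    and VH :: "'v set" and EH :: "'v set set" and lH :: "'v \<Rightarrow> 'l"
    and es :: "'u set list" and fs :: "'v set list"
  assumes "hypergraph Vq Eq" and "hypergraph VH EH"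
    and "es \<noteq> []" and "distinct es" and "set es \<subseteq> Eq"
    and "length fs = length es" and "distinct fs" and "set fs \<subseteq> EH"
    and "valid_embedding lq lH (butlast es) (butlast fs)"
  shows "valid_embedding lq lH es fs \<longleftrightarrow>
    image_mset (query_profile lq es fs) (mset_set (last es))
      = image_mset (data_profile lH fs) (mset_set (last fs))"
proof -
  have fin_es: "finite (\<Union>(set es))" and fin_fs: "finite (\<Union>(set fs))"
    using finite_Union_hyperedges assms(1,2,5,8) by blast+
  have "finite (\<Union>(set (butlast es)))" and "finite (\<Union>(set (butlast fs)))"
    using finite_Union_hyperedges assms(1,2,5,8) by (blast dest: in_set_butlastD)+
  then have prefix: "profile_mset lq (butlast es) = profile_mset lH (butlast fs)"
    using valid_embedding_iff_profile_mset_eq[of "butlast es" "butlast fs" lq lH] assms(6,9) by simp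
  have "valid_embedding lq lH es fs \<longleftrightarrow> profile_mset lq es = profile_mset lH fs"
    using valid_embedding_iff_profile_mset_eq[of es fs lq lH] assms(6) fin_es fin_fs by simp
  also have "\<dots> \<longleftrightarrow> image_mset (index_profile lq es) (mset_set (last es))
      = image_mset (index_profile lH fs) (mset_set (last fs))"
    using profile_mset_eq_iff_last_profiles_eq[OF assms(3) _ fin_es fin_fs prefix] assms(6) by simp
  also have "\<dots> \<longleftrightarrow> image_mset (query_profile lq es fs) (mset_set (last es))
      = image_mset (data_profile lH fs) (mset_set (last fs))"
    by (rule query_data_profiles_eq_iff[OF assms(7), symmetric]) (simp add: assms(6))
  finally show ?thesis .
qed

end
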